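(* Let $p$ be a prime and $F$ a field of characteristic $p$. Let $L\in F[x]$ be a $p$-polynomial of $p$-degree $n$ with no repeated roots, let $E$ be a splitting field of $L$ over $F$, and let $V_L\subseteq E$ be the $\mathbb{F}_p$-space of roots of $L$. Let $r$ be a positive divisor of $p-1$ and let $P(x)\in F[x]$ be defined by $L(x)/x=P(x^r)$. Let $L_P\in F[x]$ be a $p$-linearized polynomial of smallest degree divisible by $P$. Then the $\mathbb{F}_p$-space of roots of $L_P$ is a homomorphic image of the $r$-th symmetric power $\mathrm{Sym}^r(V_L)$ of $V_L$ over $\mathbb{F}_p$.
   Context: A $p$-polynomial of $p$-degree $n$ is $\sum_{i=0}^n a_ix^{p^i}$ with $a_n\neq0$. The $r$-th symmetric power of an $n$-dimensional space with basis $\alpha_1,\dots,\alpha_n$ is identified with the space of homogeneous polynomials of degree $r$ in $\alpha_1,\dots,\alpha_n$. *)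

theory Defs
  imports "HOL-Computational_Algebra.Polynomial" "HOL-Library.Multiset"
begin

definition is_subfield :: "'a::field set \<Rightarrow> bool" where
  "is_subfield S \<longleftrightarrow> 0 \<in> S \<and> 1 \<in> S \<and>
     (\<forall>x\<in>S. \<forall>y\<in>S. x + y \<in> S \<and> x * y \<in> S) \<and>
     (\<forall>x\<in>S. - x \<in> S \<and> inverse x \<in> S)"

definition poly_over :: "'a::zero set \<Rightarrow> 'a poly \<Rightarrow> bool" where
  "poly_over S q \<longleftrightarrow> (\<forall>i. coeff q i \<in> S)"

definition p_poly :: "nat \<Rightarrow> nat \<Rightarrow> 'a::zero poly \<Rightarrow> bool" where
  "p_poly p n L \<longleftrightarrow> coeff L (p ^ n) \<noteq> 0 \<and>
     (\<forall>k. coeff L k \<noteq> 0 \<longrightarrow> (\<exists>i\<le>n. k = p ^ i))"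

definition p_linearized :: "nat \<Rightarrow> 'a::zero poly \<Rightarrow> bool" where
  "p_linearized p L \<longleftrightarrow> (\<exists>n. p_poly p n L)"

definition is_splitting_field :: "'a::field set \<Rightarrow> 'a poly \<Rightarrow> 'a set \<Rightarrow> bool" where
  "is_splitting_field K q E \<longleftrightarrow> is_subfield E \<and> K \<subseteq> E \<and>
     (\<exists>c xs. set xs \<subseteq> E \<and> q = smult c (\<Prod>x\<leftarrow>xs. [:- x, 1:])) \<and>
     (\<forall>S. is_subfield S \<and> K \<subseteq> S \<and> {x. poly q x = 0} \<subseteq> S \<longrightarrow> E \<subseteq> S)"

definition root_space :: "'a::comm_semiring_0 set \<Rightarrow> 'a poly \<Rightarrow> 'a set" where
  "root_space E q = {x \<in> E. poly q x = 0}"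

(* r-th symmetric power of an n-dimensional F_p-space, realised as homogeneous
   polynomials of degree r in n variables with coefficients in F_p = {0..<p}:
   a monomial is a multiset of size r of variable indices < n. *)
definition sym_monomials :: "nat \<Rightarrow> nat \<Rightarrow> nat multiset set" where
  "sym_monomials n r = {m. size m = r \<and> set_mset m \<subseteq> {..<n}}"

definition sym_power :: "nat \<Rightarrow> nat \<Rightarrow> nat \<Rightarrow> (nat multiset \<Rightarrow> nat) set" where
  "sym_power p n r = {c. \<forall>m. c m < p \<and> (m \<notin> sym_monomials n r \<longrightarrow> c m = 0)}"

definition sym_add :: "nat \<Rightarrow> (nat multiset \<Rightarrow> nat) \<Rightarrow> (nat multiset \<Rightarrow> nat) \<Rightarrow> (nat multiset \<Rightarrow> nat)" where
  "sym_add p c d = (\<lambda>m. (c m + d m) mod p)"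

definition sym_smul :: "nat \<Rightarrow> nat \<Rightarrow> (nat multiset \<Rightarrow> nat) \<Rightarrow> (nat multiset \<Rightarrow> nat)" where
  "sym_smul p a c = (\<lambda>m. (a * c m) mod p)"

(* W (a subset of a field of characteristic p, with F_p acting via of_nat) is a homomorphic
   image of Sym^r(F_p^n): there is a surjective F_p-linear map Sym^r(F_p^n) \<rightarrow> W *)
definition sym_power_hom_image :: "nat \<Rightarrow> nat \<Rightarrow> nat \<Rightarrow> 'a::semiring_1 set \<Rightarrow> bool" where
  "sym_power_hom_image p n r W \<longleftrightarrow>
     (\<exists>f. (\<forall>c\<in>sym_power p n r. \<forall>d\<in>sym_power p n r. f (sym_add p c d) = f c + f d) \<and>
          (\<forall>a<p. \<forall>c\<in>sym_power p n r. f (sym_smul p a c) = of_nat a * f c) \<and>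
          f ` sym_power p n r = W)"

end

(* The roots of L form an F_p-space V of dimension k <= n, spanned by v_1, ..., v_k. For v in V,
   v^r is an F_p-combination of the monomials of degree r in the v_j, and there are at most
   N = dim Sym^r(F_p^n) of them. Counting unknowns, some nonzero additive polynomial
   sum_{i <= N} c_i x^(p^i) vanishes on these monomials, hence on every v^r, that is on every root
   of P; as P is squarefree, P divides it. Gaussian elimination moves the c_i into F, so
   minimality gives deg L_P <= p^N. Hence the roots of L_P form an F_p-space of dimension at most
   N, and every such space is a quotient of Sym^r(F_p^n). *)

theory Submission
  imports Defs "HOL-Number_Theory.Cong"
begin

section \<open>Homogeneous linear systems with coefficients in a subfield\<close>

lemma is_subfieldD:
  assumes "is_subfield K"
  shows subfield_0: "0 \<in> K" and subfield_1: "1 \<in> K"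
    and subfield_add: "x \<in> K \<Longrightarrow> y \<in> K \<Longrightarrow> x + y \<in> K"
    and subfield_mult: "x \<in> K \<Longrightarrow> y \<in> K \<Longrightarrow> x * y \<in> K"
    and subfield_uminus: "x \<in> K \<Longrightarrow> - x \<in> K"
    and subfield_diff: "x \<in> K \<Longrightarrow> y \<in> K \<Longrightarrow> x - y \<in> K"
    and subfield_divide: "x \<in> K \<Longrightarrow> y \<in> K \<Longrightarrow> x / y \<in> K"
  using assms unfolding is_subfield_def
  by (simp_all, metis diff_conv_add_uminus, metis divide_inverse)

lemma subfield_sum:
  assumes "is_subfield K" "\<And>i. i \<in> A \<Longrightarrow> f i \<in> K"
  shows "sum f A \<in> K"
  using assms(2)
  by (induction A rule: infinite_finite_induct)
    (simp_all add: subfield_0[OF assms(1)] subfield_add[OF assms(1)])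

definition pivot_eliminate :: "('i \<Rightarrow> 'j \<Rightarrow> 'a::field) \<Rightarrow> 'i \<Rightarrow> 'j \<Rightarrow> 'i \<Rightarrow> 'j \<Rightarrow> 'a" where
  "pivot_eliminate u i0 j0 i j = u i j - u i j0 / u i0 j0 * u i0 j"

lemma sum_pivot_eliminate:
  fixes u :: "'i \<Rightarrow> 'j \<Rightarrow> 'a::field"
  assumes "finite I" "i0 \<in> I" "u i0 j0 \<noteq> 0"
  shows "(\<Sum>i\<in>I. c i * u i j) =
    (\<Sum>i\<in>I - {i0}. c i * pivot_eliminate u i0 j0 i j) + (\<Sum>i\<in>I. c i * u i j0) / u i0 j0 * u i0 j"
proof -
  have "(\<Sum>i\<in>I - {i0}. c i * pivot_eliminate u i0 j0 i j) =
      (\<Sum>i\<in>I - {i0}. c i * u i j) - (\<Sum>i\<in>I - {i0}. c i * u i j0) / u i0 j0 * u i0 j"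
    unfolding sum_divide_distrib sum_distrib_right sum_subtractf[symmetric]
    by (intro sum.cong) (simp_all add: pivot_eliminate_def algebra_simps)
  then show ?thesis
    using assms by (simp add: sum.remove field_simps)
qed

lemma pivot_eliminate_reduce:
  fixes u :: "'i \<Rightarrow> 'j \<Rightarrow> 'a::field"
  assumes "finite I" "i0 \<in> I" "u i0 j0 \<noteq> 0" "finite J" "j0 \<notin> J"
    and "card (insert j0 J) < card I \<or>
      (\<exists>c. (\<exists>i\<in>I. c i \<noteq> 0) \<and> (\<forall>j\<in>insert j0 J. (\<Sum>i\<in>I. c i * u i j) = 0))"
  shows "card J < card (I - {i0}) \<or>
    (\<exists>c. (\<exists>i\<in>I - {i0}. c i \<noteq> 0) \<and>
      (\<forall>j\<in>J. (\<Sum>i\<in>I - {i0}. c i * pivot_eliminate u i0 j0 i j) = 0))"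
  using assms(6)
proof
  assume "card (insert j0 J) < card I"
  then have "card J < card (I - {i0})"
    using assms(1,2,4,5) by simp
  then show ?thesis ..
next
  assume "\<exists>c. (\<exists>i\<in>I. c i \<noteq> 0) \<and> (\<forall>j\<in>insert j0 J. (\<Sum>i\<in>I. c i * u i j) = 0)"
  then obtain c where nontrivial: "\<exists>i\<in>I. c i \<noteq> 0"
    and solution: "\<forall>j\<in>insert j0 J. (\<Sum>i\<in>I. c i * u i j) = 0"
    by blast
  have "(\<Sum>i\<in>I - {i0}. c i * pivot_eliminate u i0 j0 i j) = 0" if "j \<in> J" for j
    using that solution sum_pivot_eliminate[where u=u and c=c and j=j, OF assms(1-3)] by simp
  moreover have "\<exists>i\<in>I - {i0}. c i \<noteq> 0"
  proof (rule ccontr)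
    assume off_pivot_zero: "\<not> (\<exists>i\<in>I - {i0}. c i \<noteq> 0)"
    then have "(\<Sum>i\<in>I. c i * u i j0) = c i0 * u i0 j0"
      using assms(1,2) by (simp add: sum.remove)
    then have "c i0 = 0"
      using assms(3) solution by simp
    then show False
      using nontrivial off_pivot_zero by blast
  qed
  ultimately show ?thesis
    by blast
qed

lemma pivot_eliminate_lift:
  fixes u :: "'i \<Rightarrow> 'j \<Rightarrow> 'a::field"
  assumes K: "is_subfield K" and "finite I" "i0 \<in> I" "u i0 j0 \<noteq> 0" "\<forall>i\<in>I. u i j0 \<in> K"
    and "\<forall>i\<in>I - {i0}. c i \<in> K" "\<exists>i\<in>I - {i0}. c i \<noteq> 0"
    and "\<forall>j\<in>J. (\<Sum>i\<in>I - {i0}. c i * pivot_eliminate u i0 j0 i j) = 0"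
  shows "\<exists>c'. (\<forall>i\<in>I. c' i \<in> K) \<and> (\<exists>i\<in>I. c' i \<noteq> 0) \<and>
    (\<forall>j\<in>insert j0 J. (\<Sum>i\<in>I. c' i * u i j) = 0)"
proof (intro exI conjI)
  define c' where "c' = c(i0 := - (\<Sum>i\<in>I - {i0}. c i * u i j0) / u i0 j0)"
  have off_pivot: "(\<Sum>i\<in>I - {i0}. c' i * f i) = (\<Sum>i\<in>I - {i0}. c i * f i)" for f
    by (intro sum.cong) (auto simp: c'_def)
  have "(\<Sum>i\<in>I - {i0}. c i * u i j0) \<in> K"
    using assms(5,6) by (auto intro!: subfield_sum[OF K] subfield_mult[OF K])
  then show "\<forall>i\<in>I. c' i \<in> K"
    using assms(3-6) by (auto simp: c'_def intro!: subfield_divide[OF K] subfield_uminus[OF K])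
  show "\<exists>i\<in>I. c' i \<noteq> 0"
    using assms(7) by (auto simp: c'_def)
  have eq_j0: "(\<Sum>i\<in>I. c' i * u i j0) = 0"
    using assms(2-4) by (simp add: sum.remove off_pivot) (simp add: c'_def)
  show "\<forall>j\<in>insert j0 J. (\<Sum>i\<in>I. c' i * u i j) = 0"
  proof
    fix j assume "j \<in> insert j0 J"
    then show "(\<Sum>i\<in>I. c' i * u i j) = 0"
      using eq_j0 assms(8) sum_pivot_eliminate[where u=u and c=c' and j=j, OF assms(2-4)]
      by (auto simp: off_pivot)
  qed
qed

text \<open>Gaussian elimination: pivoting only subtracts and divides entries, so everything stays in
  \<open>K\<close>. The disjunctive hypothesis is the invariant preserved by eliminating one equation.\<close>

lemma homogeneous_system_solution_in_subfield:
  fixes K :: "'a::field set" and u :: "'i \<Rightarrow> 'j \<Rightarrow> 'a"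
  assumes K: "is_subfield K" and "finite I" "finite J"
    and "\<And>i j. i \<in> I \<Longrightarrow> j \<in> J \<Longrightarrow> u i j \<in> K"
    and "card J < card I \<or> (\<exists>c. (\<exists>i\<in>I. c i \<noteq> 0) \<and> (\<forall>j\<in>J. (\<Sum>i\<in>I. c i * u i j) = 0))"
  shows "\<exists>c. (\<forall>i\<in>I. c i \<in> K) \<and> (\<exists>i\<in>I. c i \<noteq> 0) \<and> (\<forall>j\<in>J. (\<Sum>i\<in>I. c i * u i j) = 0)"
  using assms(3,2,4,5)
proof (induction J arbitrary: I u rule: finite_induct)
  case empty
  then have "I \<noteq> {}" by auto
  then show ?case using subfield_1[OF K] by (intro exI[of _ "\<lambda>_. 1"]) auto
next
  case (insert j0 J)
  show ?case
  proof (cases "\<exists>i0\<in>I. u i0 j0 \<noteq> 0")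
    case False
    then have "card J < card I \<or> (\<exists>c. (\<exists>i\<in>I. c i \<noteq> 0) \<and> (\<forall>j\<in>J. (\<Sum>i\<in>I. c i * u i j) = 0))"
      using insert.prems(3) insert.hyps by auto
    then obtain c where "\<forall>i\<in>I. c i \<in> K" "\<exists>i\<in>I. c i \<noteq> 0" "\<forall>j\<in>J. (\<Sum>i\<in>I. c i * u i j) = 0"
      using insert.IH[OF insert.prems(1)] insert.prems(2) by blast
    then show ?thesis using False by (intro exI[of _ c]) auto
  next
    case True
    then obtain i0 where i0: "i0 \<in> I" "u i0 j0 \<noteq> 0" by blast
    have "pivot_eliminate u i0 j0 i j \<in> K" if "i \<in> I - {i0}" "j \<in> J" for i j
      using that i0 insert.prems(2)
      by (simp add: pivot_eliminate_def subfield_diff[OF K] subfield_mult[OF K] subfield_divide[OF K])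
    then obtain c where "\<forall>i\<in>I - {i0}. c i \<in> K" "\<exists>i\<in>I - {i0}. c i \<noteq> 0"
      "\<forall>j\<in>J. (\<Sum>i\<in>I - {i0}. c i * pivot_eliminate u i0 j0 i j) = 0"
      using insert.IH[of "I - {i0}" "pivot_eliminate u i0 j0"] insert.prems(1)
        pivot_eliminate_reduce[OF insert.prems(1) i0 insert.hyps(1,2) insert.prems(3)]
      by auto
    then show ?thesis
      using pivot_eliminate_lift[where u=u, OF K insert.prems(1) i0] insert.prems(2) by blast
  qed
qed

lemma underdetermined_system_nontrivial_solution:
  fixes u :: "'i \<Rightarrow> 'j \<Rightarrow> 'a::field"
  assumes "finite I" "finite J" "card J < card I"
  obtains c where "\<exists>i\<in>I. c i \<noteq> 0" "\<forall>j\<in>J. (\<Sum>i\<in>I. c i * u i j) = 0"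
  using homogeneous_system_solution_in_subfield[of UNIV I J u] assms
  by (auto simp: is_subfield_def)

lemma poly_dependence_in_subfield:
  fixes B :: "'i \<Rightarrow> 'a::field poly"
  assumes K: "is_subfield K" and "finite I" and "\<And>i. i \<in> I \<Longrightarrow> poly_over K (B i)"
    and "\<exists>i\<in>I. c i \<noteq> 0" "(\<Sum>i\<in>I. smult (c i) (B i)) = 0"
  obtains d where "\<forall>i\<in>I. d i \<in> K" "\<exists>i\<in>I. d i \<noteq> 0" "(\<Sum>i\<in>I. smult (d i) (B i)) = 0"
proof -
  define D where "D = (\<Sum>i\<in>I. degree (B i))"
  have high: "coeff (B i) j = 0" if "i \<in> I" "D < j" for i j
    using that \<open>finite I\<close> member_le_sum[of i I "\<lambda>i. degree (B i)"]
    by (intro coeff_eq_0) (simp add: D_def)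
  have comb_eq_0_iff: "(\<Sum>i\<in>I. smult (d i) (B i)) = 0 \<longleftrightarrow>
      (\<forall>j\<in>{..D}. (\<Sum>i\<in>I. d i * coeff (B i) j) = 0)" for d
  proof -
    have "coeff (\<Sum>i\<in>I. smult (d i) (B i)) j = (\<Sum>i\<in>I. d i * coeff (B i) j)" for j
      by (simp add: coeff_sum)
    moreover have "(\<Sum>i\<in>I. d i * coeff (B i) j) = 0" if "D < j" for j
      using high that by simp
    ultimately show ?thesis
      unfolding poly_eq_iff coeff_0 by (metis atMost_iff not_le)
  qed
  have "\<exists>d. (\<forall>i\<in>I. d i \<in> K) \<and> (\<exists>i\<in>I. d i \<noteq> 0) \<and>
      (\<forall>j\<in>{..D}. (\<Sum>i\<in>I. d i * coeff (B i) j) = 0)"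
    using assms(3-5) comb_eq_0_iff
    by (intro homogeneous_system_solution_in_subfield[OF K \<open>finite I\<close>])
      (auto simp: poly_over_def)
  then show ?thesis using that comb_eq_0_iff by blast
qed

text \<open>In characteristic \<open>p\<close> this is the \<open>\<bbbF>\<^sub>p\<close>-span of \<open>ws\<close>; coefficients are reduced
  mod \<open>p\<close> only where a bound is needed.\<close>

definition nat_span :: "'a::semiring_1 list \<Rightarrow> 'a set" where
  "nat_span ws = range (\<lambda>a. \<Sum>j<length ws. of_nat (a j) * ws ! j)"

lemma nat_spanI: "(\<Sum>j<length ws. of_nat (a j) * ws ! j) \<in> nat_span ws"
  by (simp add: nat_span_def)

lemma nat_span_Nil [simp]: "nat_span [] = {0}"
  by (simp add: nat_span_def)

lemma nat_span_Cons: "nat_span (w # ws) = {of_nat b * w + s |b s. s \<in> nat_span ws}"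
proof (intro equalityI subsetI)
  fix x assume "x \<in> nat_span (w # ws)"
  then obtain a where "x = (\<Sum>j<Suc (length ws). of_nat (a j) * (w # ws) ! j)"
    by (auto simp: nat_span_def)
  then have "x = of_nat (a 0) * w + (\<Sum>j<length ws. of_nat (a (Suc j)) * ws ! j)"
    unfolding sum.lessThan_Suc_shift by simp
  then show "x \<in> {of_nat b * w + s |b s. s \<in> nat_span ws}"
    using nat_spanI[of "\<lambda>j. a (Suc j)" ws] by blast
next
  fix x assume "x \<in> {of_nat b * w + s |b s. s \<in> nat_span ws}"
  then obtain b a where "x = of_nat b * w + (\<Sum>j<length ws. of_nat (a j) * ws ! j)"
    by (auto simp: nat_span_def)
  then have "x = (\<Sum>j<length (w # ws). of_nat (case_nat b a j) * (w # ws) ! j)"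
    unfolding length_Cons sum.lessThan_Suc_shift by simp
  then show "x \<in> nat_span (w # ws)"
    unfolding nat_span_def by blast
qed

lemma add_in_nat_span:
  assumes "x \<in> nat_span ws" "y \<in> nat_span ws"
  shows "x + y \<in> nat_span ws"
proof -
  obtain a b where "x = (\<Sum>j<length ws. of_nat (a j) * ws ! j)"
    and "y = (\<Sum>j<length ws. of_nat (b j) * ws ! j)"
    using assms by (auto simp: nat_span_def)
  then have "x + y = (\<Sum>j<length ws. of_nat (a j + b j) * ws ! j)"
    by (simp add: sum.distrib algebra_simps)
  then show ?thesis using nat_spanI[of "\<lambda>j. a j + b j" ws] by simp
qed

lemma of_nat_mult_in_nat_span:
  assumes "x \<in> nat_span ws"
  shows "of_nat t * x \<in> nat_span ws"
proof -
  obtain a where "x = (\<Sum>j<length ws. of_nat (a j) * ws ! j)"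
    using assms by (auto simp: nat_span_def)
  then have "of_nat t * x = (\<Sum>j<length ws. of_nat (t * a j) * ws ! j)"
    by (simp add: sum_distrib_left algebra_simps)
  then show ?thesis using nat_spanI[of "\<lambda>j. t * a j" ws] by simp
qed

lemma nat_span_subset:
  assumes "0 \<in> Z" "\<And>x y. x \<in> Z \<Longrightarrow> y \<in> Z \<Longrightarrow> x + y \<in> Z" "set ws \<subseteq> Z"
  shows "nat_span ws \<subseteq> Z"
  using assms(3)
proof (induction ws)
  case (Cons w ws)
  have "of_nat b * w \<in> Z" for b
    using Cons.prems assms(1,2) by (induction b) (auto simp: algebra_simps)
  then show ?case
    using Cons assms(2) by (auto simp: nat_span_Cons)
qed (simp add: assms(1))

lemma additive_of_nat_mult:
  fixes q :: "'a::ring_1 \<Rightarrow> 'b::ring_1"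
  assumes "additive q"
  shows "q (of_nat n * x) = of_nat n * q x"
  by (induction n) (simp_all add: algebra_simps additive.zero[OF assms] additive.add[OF assms])

definition eval_monomial :: "'a::comm_semiring_1 list \<Rightarrow> nat multiset \<Rightarrow> 'a" where
  "eval_monomial ws m = (\<Prod>j\<in>#m. ws ! j)"

text \<open>The induction on \<open>r\<close> is over all additive \<open>q\<close> at once: the step applies the hypothesis
  to the additive maps \<open>\<lambda>x. q (ws ! j * x)\<close>.\<close>

lemma additive_vanishes_on_powers:
  fixes q :: "'a::comm_ring_1 \<Rightarrow> 'a"
  assumes "additive q"
    and "\<And>m. m \<in> sym_monomials (length ws) r \<Longrightarrow> q (eval_monomial ws m) = 0"
    and "v \<in> nat_span ws"
  shows "q (v ^ r) = 0"
  using assms(1,2)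
proof (induction r arbitrary: q)
  case 0
  have "{#} \<in> sym_monomials (length ws) 0"
    by (simp add: sym_monomials_def)
  from "0.prems"(2)[OF this] show ?case
    by (simp add: eval_monomial_def)
next
  case (Suc r)
  obtain a where v: "v = (\<Sum>j<length ws. of_nat (a j) * ws ! j)"
    using assms(3) by (auto simp: nat_span_def)
  have "q (ws ! j * v ^ r) = 0" if "j < length ws" for j
  proof (rule Suc.IH)
    show "additive (\<lambda>x. q (ws ! j * x))"
      using additive.add[OF Suc.prems(1)] by unfold_locales (simp add: distrib_left)
    fix m assume "m \<in> sym_monomials (length ws) r"
    then have "add_mset j m \<in> sym_monomials (length ws) (Suc r)"
      using that by (simp add: sym_monomials_def)
    from Suc.prems(2)[OF this] show "q (ws ! j * eval_monomial ws m) = 0"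
      by (simp add: eval_monomial_def)
  qed
  moreover have "q (v ^ Suc r) = (\<Sum>j<length ws. of_nat (a j) * q (ws ! j * v ^ r))"
    unfolding v power_Suc sum_distrib_right
    by (simp add: additive.sum[OF Suc.prems(1)] additive_of_nat_mult[OF Suc.prems(1)] mult.assoc
        flip: v)
  ultimately show ?case by simp
qed

section \<open>Linearized polynomials\<close>

definition linearized_poly :: "nat \<Rightarrow> nat \<Rightarrow> (nat \<Rightarrow> 'a::comm_semiring_1) \<Rightarrow> 'a poly" where
  "linearized_poly p N c = (\<Sum>i\<le>N. monom (c i) (p ^ i))"

lemma poly_linearized_poly: "poly (linearized_poly p N c) x = (\<Sum>i\<le>N. c i * x ^ p ^ i)"
  by (simp add: linearized_poly_def poly_sum poly_monom)

lemma coeff_linearized_poly: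
  "coeff (linearized_poly p N c) k = (\<Sum>i\<le>N. if p ^ i = k then c i else 0)"
  by (simp add: linearized_poly_def coeff_sum coeff_monom)

lemma coeff_linearized_poly_power:
  assumes "p > 1" "i \<le> N"
  shows "coeff (linearized_poly p N c) (p ^ i) = c i"
proof -
  have "(\<Sum>j\<le>N. if p ^ j = p ^ i then c j else 0) = (\<Sum>j\<le>N. if j = i then c j else 0)"
    using assms(1) by (intro sum.cong) simp_all
  then show ?thesis
    using assms(2) by (simp add: coeff_linearized_poly)
qed

lemma coeff_linearized_poly_nonzero:
  assumes "coeff (linearized_poly p N c) k \<noteq> 0"
  shows "\<exists>i\<le>N. k = p ^ i \<and> c i \<noteq> 0"
proof (rule ccontr)
  assume "\<not> ?thesis"
  then have "(\<Sum>i\<le>N. if p ^ i = k then c i else 0) = 0"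
    by (intro sum.neutral) auto
  with assms show False
    by (simp add: coeff_linearized_poly)
qed

lemma degree_linearized_poly:
  assumes "p > 1"
  shows "degree (linearized_poly p N c) \<le> p ^ N"
proof (rule degree_le, intro allI impI)
  fix k assume "p ^ N < k"
  then show "coeff (linearized_poly p N c) k = 0"
    using coeff_linearized_poly_nonzero[of p N c k] power_increasing[OF _ less_imp_le[OF assms]]
    by (metis not_le)
qed

lemma poly_over_linearized_poly:
  assumes "is_subfield K" "\<And>i. i \<le> N \<Longrightarrow> c i \<in> K"
  shows "poly_over K (linearized_poly p N c)"
  unfolding poly_over_def coeff_linearized_poly
  using assms by (auto intro!: subfield_sum simp: subfield_0)

lemma p_linearized_linearized_poly:
  assumes "p > 1" "\<exists>i\<le>N. c i \<noteq> 0"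
  shows "p_linearized p (linearized_poly p N c)"
proof -
  define S where "S = {i. i \<le> N \<and> c i \<noteq> 0}"
  have "finite S" "S \<noteq> {}"
    using assms(2) by (auto simp: S_def)
  then have top: "Max S \<le> N" "c (Max S) \<noteq> 0" "\<And>i. i \<le> N \<Longrightarrow> c i \<noteq> 0 \<Longrightarrow> i \<le> Max S"
    using Max_in[of S] Max_ge[of S] by (auto simp: S_def)
  have "p_poly p (Max S) (linearized_poly p N c)"
    unfolding p_poly_def
  proof (intro conjI allI impI)
    show "coeff (linearized_poly p N c) (p ^ Max S) \<noteq> 0"
      unfolding coeff_linearized_poly_power[OF assms(1) top(1)] by (rule top(2))
    fix k assume "coeff (linearized_poly p N c) k \<noteq> 0"
    then obtain i where "i \<le> N" "k = p ^ i" "c i \<noteq> 0"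
      using coeff_linearized_poly_nonzero by blast
    then show "\<exists>i\<le>Max S. k = p ^ i"
      using top(3) by blast
  qed
  then show ?thesis
    unfolding p_linearized_def by blast
qed

lemma finite_sym_monomials: "finite (sym_monomials n r)"
proof -
  have "sym_monomials n r = multisets_of_size {..<n} r"
    by (auto simp: sym_monomials_def multisets_of_size_def)
  then show ?thesis by auto
qed

lemma sym_monomials_mono: "k \<le> n \<Longrightarrow> sym_monomials k r \<subseteq> sym_monomials n r"
  by (auto simp: sym_monomials_def)

lemma degree_p_poly:
  assumes "p_poly p n L" "p > 1"
  shows "degree L = p ^ n"
proof (rule antisym)
  show "p ^ n \<le> degree L"
    using assms(1) by (intro le_degree) (simp add: p_poly_def)
  show "degree L \<le> p ^ n"
  proof (rule degree_le, intro allI impI)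
    fix k assume "p ^ n < k"
    show "coeff L k = 0"
    proof (rule ccontr)
      assume "coeff L k \<noteq> 0"
      then obtain i where "i \<le> n" "k = p ^ i"
        using assms(1) unfolding p_poly_def by blast
      then have "k \<le> p ^ n"
        using power_increasing[OF _ less_imp_le[OF assms(2)]] by blast
      with \<open>p ^ n < k\<close> show False
        by simp
    qed
  qed
qed

text \<open>A linearized multiple \<open>linearized_poly p N c = A * P\<close> with \<open>degree A \<le> p ^ N\<close> is a linear
  dependence among the polynomials below, with coefficients \<open>c\<close> and the coefficients of \<open>A\<close>.
  All of them lie in \<open>K[x]\<close> when \<open>P\<close> does, so such a multiple can be found over \<open>K\<close>.\<close>

definition linearized_multiple_family :: "nat \<Rightarrow> 'a::comm_ring_1 poly \<Rightarrow> nat + nat \<Rightarrow> 'a poly" where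
  "linearized_multiple_family p P x =
    (case x of Inl i \<Rightarrow> monom 1 (p ^ i) | Inr t \<Rightarrow> - (monom 1 t * P))"

lemma sum_smult_linearized_multiple_family:
  "(\<Sum>x\<in>{..N} <+> {..T}. smult (d x) (linearized_multiple_family p P x)) =
    linearized_poly p N (d \<circ> Inl) - (\<Sum>t\<le>T. monom (d (Inr t)) t) * P"
proof -
  have "(\<Sum>x\<in>{..N} <+> {..T}. f x) = (\<Sum>i\<le>N. f (Inl i)) + (\<Sum>t\<le>T. f (Inr t))" for f :: "_ \<Rightarrow> 'a poly"
    unfolding Plus_def by (subst sum.union_disjoint) (auto simp: sum.reindex)
  moreover have "smult a (monom 1 t * P) = monom a t * P" for a t
    by (metis mult_smult_left smult_monom mult.right_neutral)
  ultimately show ?thesis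
    by (simp add: linearized_multiple_family_def linearized_poly_def smult_monom
        sum_distrib_right sum_negf)
qed

lemma poly_over_linearized_multiple_family:
  assumes K: "is_subfield K" and "poly_over K P"
  shows "poly_over K (linearized_multiple_family p P x)"
  using assms(2)
  by (cases x) (auto simp: linearized_multiple_family_def poly_over_def coeff_monom_mult coeff_monom
      subfield_0[OF K] subfield_1[OF K] subfield_mult[OF K] subfield_uminus[OF K])

lemma sum_monom_eq_0_iff: "(\<Sum>t\<le>T. monom (a t) t) = 0 \<longleftrightarrow> (\<forall>t\<le>T. a t = 0)"
proof
  assume sum_0: "(\<Sum>t\<le>T. monom (a t) t) = 0"
  show "\<forall>t\<le>T. a t = 0"
  proof (intro allI impI)
    fix t assume "t \<le> T"
    then have "a t = coeff (\<Sum>t\<le>T. monom (a t) t) t"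
      by (simp add: coeff_sum coeff_monom)
    then show "a t = 0"
      by (simp only: sum_0 coeff_0)
  qed
qed simp

lemma p_linearized_multiple_in_subfield:
  fixes P :: "'a::field poly"
  assumes K: "is_subfield K" and "p > 1" "poly_over K P" "P \<noteq> 0"
    and "\<exists>i\<le>N. c i \<noteq> 0" "P dvd linearized_poly p N c"
  obtains Q where "poly_over K Q" "p_linearized p Q" "P dvd Q" "degree Q \<le> p ^ N"
proof -
  let ?I = "{..N} <+> {..p ^ N}" and ?B = "linearized_multiple_family p P"
  obtain A where A: "linearized_poly p N c = P * A"
    using assms(6) by (elim dvdE)
  have "degree A \<le> p ^ N"
    using degree_linearized_poly[OF assms(2), of N c] assms(4)
    by (cases "A = 0") (simp_all add: A degree_mult_eq)
  then have "(\<Sum>t\<le>p ^ N. monom (coeff A t) t) = A"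
    by (simp add: poly_as_sum_of_monoms')
  then have dependent: "(\<Sum>x\<in>?I. smult (case_sum c (coeff A) x) (?B x)) = 0"
    unfolding sum_smult_linearized_multiple_family using A by (simp add: comp_def mult.commute)
  obtain i where "i \<le> N" "c i \<noteq> 0"
    using assms(5) by blast
  then have nontrivial: "\<exists>x\<in>?I. case_sum c (coeff A) x \<noteq> 0"
    by (auto intro!: bexI[of _ "Inl i"])
  obtain d where d: "\<forall>x\<in>?I. d x \<in> K" "\<exists>x\<in>?I. d x \<noteq> 0" "(\<Sum>x\<in>?I. smult (d x) (?B x)) = 0"
    by (rule poly_dependence_in_subfield[OF K _ poly_over_linearized_multiple_family[OF K assms(3)]
          nontrivial dependent]) simp
  then have Q: "linearized_poly p N (d \<circ> Inl) = (\<Sum>t\<le>p ^ N. monom (d (Inr t)) t) * P"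
    unfolding sum_smult_linearized_multiple_family by simp
  have "\<exists>i\<le>N. (d \<circ> Inl) i \<noteq> 0"
  proof (rule ccontr)
    assume no_Inl: "\<not> ?thesis"
    then have "linearized_poly p N (d \<circ> Inl) = 0"
      by (simp add: linearized_poly_def)
    then have "\<forall>t\<le>p ^ N. d (Inr t) = 0"
      using Q assms(4) by (simp add: sum_monom_eq_0_iff)
    then show False
      using d(2) no_Inl by auto
  qed
  show thesis
  proof (rule that)
    have "(d \<circ> Inl) i \<in> K" if "i \<le> N" for i
      using that d(1) by (simp add: InlI)
    then show "poly_over K (linearized_poly p N (d \<circ> Inl))"
      by (rule poly_over_linearized_poly[OF K])
    show "p_linearized p (linearized_poly p N (d \<circ> Inl))"
      by (rule p_linearized_linearized_poly) fact+
    show "P dvd linearized_poly p N (d \<circ> Inl)"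
      unfolding Q by simp
    show "degree (linearized_poly p N (d \<circ> Inl)) \<le> p ^ N"
      by (rule degree_linearized_poly) fact
  qed
qed

section \<open>Squarefree polynomials over an algebraically closed field\<close>

lemma rsquarefree_iff_no_square_factor:
  "rsquarefree p \<longleftrightarrow> p \<noteq> 0 \<and> (\<forall>a. \<not> [:-a, 1:] ^ 2 dvd p)"
  unfolding rsquarefree_def order_divides by (auto simp: not_le less_2_cases_iff)

lemma rsquarefree_dvd:
  assumes "rsquarefree p" "q dvd p"
  shows "rsquarefree q"
  using assms dvd_trans by (auto simp: rsquarefree_iff_no_square_factor)

lemma rsquarefree_dvd_if_roots:
  fixes P G :: "'a::alg_closed_field poly"
  assumes "rsquarefree P" "\<And>x. poly P x = 0 \<Longrightarrow> poly G x = 0"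
  shows "P dvd G"
  using assms
proof (induction "degree P" arbitrary: P rule: less_induct)
  case less
  show ?case
  proof (cases "degree P = 0")
    case True
    then have "is_unit P"
      using less.prems(1) by (simp add: rsquarefree_def is_unit_iff_degree)
    then show ?thesis
      by (rule unit_imp_dvd)
  next
    case False
    then obtain x where "poly P x = 0"
      using alg_closed_imp_poly_has_root by blast
    then obtain P1 where P: "P = [:-x, 1:] * P1"
      by (auto simp: poly_eq_0_iff_dvd elim!: dvdE)
    have "P1 dvd P"
      unfolding P by (rule dvd_triv_right)
    then have "rsquarefree P1"
      by (rule rsquarefree_dvd[OF less.prems(1)])
    then have "P1 \<noteq> 0"
      by (simp add: rsquarefree_def)
    have "poly P1 x \<noteq> 0"
    proof
      assume "poly P1 x = 0"
      then have "[:-x, 1:] dvd P1"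
        by (simp only: poly_eq_0_iff_dvd)
      then have "[:-x, 1:] ^ 2 dvd P"
        unfolding P power2_eq_square by (rule mult_dvd_mono[OF dvd_refl])
      then show False
        using less.prems(1) unfolding rsquarefree_iff_no_square_factor by blast
    qed
    have "degree P = Suc (degree P1)"
      using \<open>P1 \<noteq> 0\<close> unfolding P by (subst degree_mult_eq) auto
    then have "degree P1 < degree P"
      by simp
    then have "P1 dvd G"
      using less.hyps \<open>rsquarefree P1\<close> less.prems(2) by (simp add: P)
    then obtain H where G: "G = P1 * H"
      by (elim dvdE)
    have "poly H x = 0"
      using less.prems(2)[of x] \<open>poly P1 x \<noteq> 0\<close> by (simp add: P G)
    then have "[:-x, 1:] dvd H"
      by (simp only: poly_eq_0_iff_dvd)
    then show ?thesis
      unfolding P G by (subst mult.commute) (rule mult_dvd_mono[OF _ dvd_refl])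
  qed
qed

lemma rsquarefree_pcompose_monomD:
  fixes P :: "'a::alg_closed_field poly"
  assumes "rsquarefree (Q * pcompose P (monom 1 r))" "r > 0"
  shows "rsquarefree P"
  unfolding rsquarefree_iff_no_square_factor
proof (intro conjI allI notI)
  assume "P = 0"
  then show False
    using assms(1) by (simp add: rsquarefree_def)
next
  fix a assume "[:-a, 1:] ^ 2 dvd P"
  obtain v where "v ^ r = a"
    using assms(2) nth_root_exists by blast
  then have "[:-v, 1:] dvd pcompose [:-a, 1:] (monom 1 r)"
    by (simp add: poly_eq_0_iff_dvd[symmetric] poly_pcompose poly_monom)
  then have "[:-v, 1:] ^ 2 dvd (pcompose [:-a, 1:] (monom 1 r)) ^ 2"
    by (rule dvd_power_same)
  also have "\<dots> = pcompose ([:-a, 1:] ^ 2) (monom 1 r)"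
    by (simp only: power2_eq_square pcompose_mult)
  also have "\<dots> dvd pcompose P (monom 1 r)"
    using \<open>[:-a, 1:] ^ 2 dvd P\<close> by (auto simp: pcompose_mult elim!: dvdE)
  also have "\<dots> dvd Q * pcompose P (monom 1 r)"
    by simp
  finally show False
    using assms(1) by (auto simp: rsquarefree_iff_no_square_factor)
qed

lemma dvd_if_roots_pcompose_monom:
  fixes P G :: "'a::alg_closed_field poly"
  assumes "rsquarefree (Q * pcompose P (monom 1 r))" "r > 0"
    and "\<And>v. poly (Q * pcompose P (monom 1 r)) v = 0 \<Longrightarrow> poly G (v ^ r) = 0"
  shows "P dvd G"
proof (rule rsquarefree_dvd_if_roots)
  show "rsquarefree P"
    by (rule rsquarefree_pcompose_monomD[OF assms(1,2)])
  fix b assume "poly P b = 0"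
  obtain v where v: "v ^ r = b"
    using assms(2) nth_root_exists by blast
  with \<open>poly P b = 0\<close> have "poly (Q * pcompose P (monom 1 r)) v = 0"
    by (simp add: poly_pcompose poly_monom)
  from assms(3)[OF this] show "poly G b = 0"
    by (simp only: v)
qed

section \<open>Characteristic \<open>p\<close>\<close>

context
  fixes p :: nat
  assumes prime_p: "prime p" and CHAR_p: "CHAR('a::field) = p"
begin

lemma of_nat_mod_p: "of_nat (n mod p) = (of_nat n :: 'a)"
  using of_nat_eq_iff_cong_CHAR[where 'a='a, of "n mod p" n] CHAR_p by (simp add: cong_def)

lemma uminus_in_nat_span:
  assumes "(x::'a) \<in> nat_span ws"
  shows "- x \<in> nat_span ws"
proof -
  have "of_nat (p - 1) + 1 = (of_nat p :: 'a)"
    using prime_gt_0_nat[OF prime_p] by (simp add: of_nat_diff)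
  also have "\<dots> = 0"
    by (simp flip: CHAR_p)
  finally have "of_nat (p - 1) = (- 1 :: 'a)"
    by (simp add: eq_neg_iff_add_eq_0)
  then have "- x = of_nat (p - 1) * x"
    by simp
  then show ?thesis using of_nat_mult_in_nat_span[OF assms] by simp
qed

lemma nat_span_cancel:
  assumes "of_nat d * (w::'a) \<in> nat_span ws" "\<not> p dvd d"
  shows "w \<in> nat_span ws"
proof -
  have "coprime d p"
    using prime_imp_coprime[OF prime_p assms(2)] by (simp add: coprime_commute)
  then obtain t where "[d * t = 1] (mod p)"
    using cong_solve_coprime_nat by auto
  then have "of_nat t * of_nat d = (1::'a)"
    using of_nat_eq_iff_cong_CHAR[where 'a='a, of "d * t" 1] CHAR_p by (simp add: mult.commute)
  then have "w = of_nat t * (of_nat d * w)"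
    by (simp flip: mult.assoc)
  then show ?thesis using of_nat_mult_in_nat_span[OF assms(1), of t] by (simp only:)
qed

lemma nat_span_Cons_bounded:
  "nat_span (w # ws) = (\<lambda>(b, s). of_nat b * (w::'a) + s) ` ({..<p} \<times> nat_span ws)"
proof (intro equalityI subsetI)
  fix x assume "x \<in> nat_span (w # ws)"
  then obtain b s where x: "x = of_nat b * w + s" "s \<in> nat_span ws"
    by (auto simp: nat_span_Cons)
  then have "x = (\<lambda>(b, s). of_nat b * w + s) (b mod p, s)"
    by (simp add: of_nat_mod_p)
  moreover have "(b mod p, s) \<in> {..<p} \<times> nat_span ws"
    using x(2) prime_gt_0_nat[OF prime_p] by simp
  ultimately show "x \<in> (\<lambda>(b, s). of_nat b * w + s) ` ({..<p} \<times> nat_span ws)"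
    by (rule image_eqI)
qed (auto simp: nat_span_Cons)

lemma card_nat_span_Cons:
  assumes "(w::'a) \<notin> nat_span ws"
  shows "card (nat_span (w # ws)) = p * card (nat_span ws)"
proof -
  have no_collision: False
    if "of_nat b * w + s = of_nat b' * w + s'" "b' < b" "b < p" "s \<in> nat_span ws" "s' \<in> nat_span ws"
    for b b' s s'
  proof -
    have "of_nat (b - b') * w = s' + - s"
      using that(1,2) by (simp add: of_nat_diff algebra_simps)
    moreover have "\<not> p dvd (b - b')"
      using that(2,3) by (auto dest: dvd_imp_le)
    ultimately show False
      using assms that(4,5) by (metis add_in_nat_span nat_span_cancel uminus_in_nat_span)
  qed
  have same_coefficient: "b = b'"
    if "of_nat b * w + s = of_nat b' * w + s'" "b < p" "b' < p" "s \<in> nat_span ws" "s' \<in> nat_span ws"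
    for b b' s s'
    using no_collision[OF that(1) _ that(2,4,5)] no_collision[OF that(1)[symmetric] _ that(3,5,4)]
    by (cases b b' rule: linorder_cases) auto
  have "inj_on (\<lambda>(b, s). of_nat b * w + s) ({..<p} \<times> nat_span ws)"
  proof (rule inj_onI, clarify)
    fix b s b' s'
    assume "b < p" "s \<in> nat_span ws" "b' < p" "s' \<in> nat_span ws"
      and eq: "of_nat b * w + s = of_nat b' * w + s'"
    moreover from calculation have "b = b'"
      using same_coefficient by blast
    ultimately show "b = b' \<and> s = s'" by simp
  qed
  then show ?thesis
    by (simp add: nat_span_Cons_bounded card_image card_cartesian_product)
qed

lemma finite_additive_subgroup_spanned:
  fixes Z :: "'a set"
  assumes Z: "finite Z" "0 \<in> Z" "\<And>x y. x \<in> Z \<Longrightarrow> y \<in> Z \<Longrightarrow> x + y \<in> Z"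
  obtains ws where "nat_span ws = Z" "card Z = p ^ length ws"
proof -
  define independent_length where
    "independent_length k \<longleftrightarrow> (\<exists>ws. length ws = k \<and> set ws \<subseteq> Z \<and> card (nat_span ws) = p ^ k)" for k
  have bounded: "k < card Z" if k: "independent_length k" for k
  proof -
    obtain ws where ws: "length ws = k" "set ws \<subseteq> Z" "card (nat_span ws) = p ^ k"
      using k unfolding independent_length_def by blast
    have "k < 2 ^ k" by (rule less_exp)
    also have "\<dots> \<le> p ^ k"
      using prime_ge_2_nat[OF prime_p] by (rule power_mono) simp
    also have "\<dots> \<le> card Z"
      using card_mono[OF Z(1) nat_span_subset[OF Z(2,3) ws(2)]] ws(3) by simp
    finally show ?thesis .
  qed
  have "independent_length 0"
    unfolding independent_length_def by (intro exI[of _ "[]"]) simp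
  then have "\<exists>k. independent_length k \<and> (\<forall>k'. independent_length k' \<longrightarrow> k' \<le> k)"
    by (rule ex_has_greatest_nat[where b="card Z"]) (use bounded in auto)
  then obtain k where k: "independent_length k" and maximal: "\<forall>k'. independent_length k' \<longrightarrow> k' \<le> k"
    by blast
  from k obtain ws where ws: "length ws = k" "set ws \<subseteq> Z" "card (nat_span ws) = p ^ k"
    unfolding independent_length_def by blast
  have "nat_span ws = Z"
  proof (rule ccontr)
    assume "nat_span ws \<noteq> Z"
    then obtain w where w: "w \<in> Z" "w \<notin> nat_span ws"
      using nat_span_subset[OF Z(2,3) ws(2)] by blast
    have "length (w # ws) = Suc k" "set (w # ws) \<subseteq> Z" "card (nat_span (w # ws)) = p ^ Suc k"
      using ws w card_nat_span_Cons[OF w(2)] by simp_all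
    then have "independent_length (Suc k)"
      unfolding independent_length_def by blast
    then show False
      using maximal by auto
  qed
  with ws(3) show ?thesis
    using that ws(1) by blast
qed

lemma additive_poly_p_powers:
  fixes Q :: "'a poly"
  assumes "\<And>k. coeff Q k \<noteq> 0 \<Longrightarrow> \<exists>i. k = p ^ i"
  shows "additive (poly Q)"
proof
  fix x y :: 'a
  have "coeff Q k * (x + y) ^ k = coeff Q k * x ^ k + coeff Q k * y ^ k" for k
  proof (cases "coeff Q k = 0")
    case False
    then obtain i where "k = p ^ i" using assms by blast
    then show ?thesis
      using freshmans_dream'[where 'a='a and m=k and n=i] prime_p CHAR_p by (simp add: algebra_simps)
  qed simp
  then show "poly Q (x + y) = poly Q x + poly Q y"
    unfolding poly_altdef by (simp add: sum.distrib)
qed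

lemma p_linearized_roots_spanned:
  fixes Q :: "'a poly"
  assumes "p_linearized p Q" "degree Q \<le> p ^ m"
  obtains ws where "nat_span ws = {x. poly Q x = 0}" "length ws \<le> m"
proof -
  obtain n where n: "p_poly p n Q"
    using assms(1) unfolding p_linearized_def by blast
  then have "Q \<noteq> 0"
    unfolding p_poly_def by (metis coeff_0)
  have "additive (poly Q)"
    using n unfolding p_poly_def by (intro additive_poly_p_powers) blast
  then have roots: "poly Q 0 = 0" "poly Q x = 0 \<Longrightarrow> poly Q y = 0 \<Longrightarrow> poly Q (x + y) = 0" for x y
    by (simp_all add: additive.zero additive.add)
  obtain ws where ws: "nat_span ws = {x. poly Q x = 0}" "card {x. poly Q x = 0} = p ^ length ws"
    by (rule finite_additive_subgroup_spanned[of "{x. poly Q x = 0}"])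
      (simp_all add: poly_roots_finite[OF \<open>Q \<noteq> 0\<close>] roots)
  have "p ^ length ws \<le> p ^ m"
    using ws(2) card_poly_roots_bound[OF \<open>Q \<noteq> 0\<close>] assms(2) by linarith
  then have "length ws \<le> m"
    by (rule power_le_imp_le_exp[OF prime_gt_1_nat[OF prime_p]])
  then show thesis using that ws(1) by blast
qed

lemma sym_power_hom_image_nat_span:
  fixes zs :: "'a list"
  assumes "length zs \<le> card (sym_monomials n r)"
  shows "sym_power_hom_image p n r (nat_span zs)"
proof -
  obtain e where e: "e ` {..<length zs} \<subseteq> sym_monomials n r" "inj_on e {..<length zs}"
    using card_le_inj[OF finite_lessThan finite_sym_monomials] assms by (metis card_lessThan)
  define f where "f c = (\<Sum>j<length zs. of_nat (c (e j)) * zs ! j)" for c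
  have "f (sym_add p c d) = f c + f d" for c d
    by (simp add: f_def sym_add_def of_nat_mod_p sum.distrib algebra_simps)
  moreover have "f (sym_smul p a c) = of_nat a * f c" for a c
    by (simp add: f_def sym_smul_def of_nat_mod_p sum_distrib_left algebra_simps)
  moreover have "f ` sym_power p n r = nat_span zs"
  proof (intro equalityI subsetI)
    fix x assume "x \<in> f ` sym_power p n r"
    then obtain c where "x = f c" by blast
    then show "x \<in> nat_span zs"
      using nat_spanI[of "\<lambda>j. c (e j)" zs] by (simp add: f_def)
  next
    fix x assume "x \<in> nat_span zs"
    then obtain a where x: "x = (\<Sum>j<length zs. of_nat (a j) * zs ! j)"
      by (auto simp: nat_span_def)
    define c where
      "c m = (if m \<in> e ` {..<length zs} then a (the_inv_into {..<length zs} e m) mod p else 0)" for m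
    have "c m < p" for m
      using prime_gt_0_nat[OF prime_p] by (simp add: c_def)
    moreover have "c m = 0" if "m \<notin> sym_monomials n r" for m
      using that e(1) unfolding c_def by auto
    ultimately have "c \<in> sym_power p n r"
      unfolding sym_power_def by blast
    moreover have "c (e j) = a j mod p" if "j < length zs" for j
      using that the_inv_into_f_f[OF e(2)] by (simp add: c_def)
    then have "f c = x"
      unfolding x f_def by (intro sum.cong) (simp_all add: of_nat_mod_p)
    ultimately show "x \<in> f ` sym_power p n r" by blast
  qed
  ultimately show ?thesis unfolding sym_power_hom_image_def by blast
qed

lemma linearized_poly_vanishing_on_powers:
  fixes ws :: "'a list"
  assumes "length ws \<le> n"
  obtains c where "\<exists>i\<le>card (sym_monomials n r). c i \<noteq> 0"
    "\<And>v. v \<in> nat_span ws \<Longrightarrow> poly (linearized_poly p (card (sym_monomials n r)) c) (v ^ r) = 0"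
proof -
  define N where "N = card (sym_monomials n r)"
  define M where "M = sym_monomials (length ws) r"
  have "finite M"
    unfolding M_def by (rule finite_sym_monomials)
  have "card M \<le> N"
    unfolding M_def N_def using sym_monomials_mono[OF assms] by (intro card_mono finite_sym_monomials)
  then have "card M < card {..N}"
    by simp
  then obtain c where c: "\<exists>i\<in>{..N}. c i \<noteq> 0"
    "\<forall>m\<in>M. (\<Sum>i\<in>{..N}. c i * eval_monomial ws m ^ p ^ i) = 0"
    by (rule underdetermined_system_nontrivial_solution[OF finite_atMost \<open>finite M\<close>])
  have "\<exists>i\<le>N. c i \<noteq> 0"
    using c(1) atMost_iff by blast
  moreover have "additive (poly (linearized_poly p N c))"
    by (rule additive_poly_p_powers) (use coeff_linearized_poly_nonzero in blast)
  then have "poly (linearized_poly p N c) (v ^ r) = 0" if "v \<in> nat_span ws" for v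
    by (rule additive_vanishes_on_powers[OF _ _ that]) (use c(2) in \<open>simp add: poly_linearized_poly M_def\<close>)
  ultimately show thesis
    by (rule that[unfolded N_def[symmetric]])
qed


lemma sym_power_hom_image_p_linearized_roots:
  fixes Q :: "'a poly"
  assumes "p_linearized p Q" "degree Q \<le> p ^ card (sym_monomials n r)"
  shows "sym_power_hom_image p n r (root_space UNIV Q)"
proof -
  obtain zs where zs: "nat_span zs = {x. poly Q x = 0}" "length zs \<le> card (sym_monomials n r)"
    by (rule p_linearized_roots_spanned[OF assms])
  from zs(2) have "sym_power_hom_image p n r (nat_span zs)"
    by (rule sym_power_hom_image_nat_span)
  then show ?thesis
    using zs(1) by (simp add: root_space_def)
qed
end

theorem corollary5p2:
  fixes p n r :: nat
    and K E :: "'e::alg_closed_field set"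
    and L P LP :: "'e poly"
  assumes "prime p"
    and "CHAR('e) = p"
    and "is_subfield K"
    and "poly_over K L" and "p_poly p n L" and "rsquarefree L"
    and "is_splitting_field K L E"
    and "r > 0" and "r dvd p - 1"
    and "poly_over K P" and "L = [:0, 1:] * pcompose P (monom 1 r)"
    and "poly_over K LP" and "p_linearized p LP" and "P dvd LP"
    and "\<And>Q. poly_over K Q \<Longrightarrow> p_linearized p Q \<Longrightarrow> P dvd Q \<Longrightarrow> degree LP \<le> degree Q"
  shows "sym_power_hom_image p n r (root_space UNIV LP)"
proof -
  note prime_p = assms(1) and CHAR_p = assms(2)
  have "p > 1"
    using prime_gt_1_nat[OF prime_p] .
  have "p_linearized p L" "degree L \<le> p ^ n"
    using assms(5) degree_p_poly[OF assms(5) \<open>p > 1\<close>] unfolding p_linearized_def by auto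
  then obtain ws where ws: "nat_span ws = {x. poly L x = 0}" "length ws \<le> n"
    by (rule p_linearized_roots_spanned[OF prime_p CHAR_p])
  define N where "N = card (sym_monomials n r)"
  obtain c where c: "\<exists>i\<le>N. c i \<noteq> 0"
    "\<And>v. v \<in> nat_span ws \<Longrightarrow> poly (linearized_poly p N c) (v ^ r) = 0"
    using linearized_poly_vanishing_on_powers[OF prime_p CHAR_p ws(2), where r = r]
    unfolding N_def by metis
  have "P dvd linearized_poly p N c"
  proof (rule dvd_if_roots_pcompose_monom[OF assms(6)[unfolded assms(11)] assms(8)])
    fix v assume "poly ([:0, 1:] * pcompose P (monom 1 r)) v = 0"
    then show "poly (linearized_poly p N c) (v ^ r) = 0"
      by (intro c(2)) (simp add: ws(1) assms(11))
  qed
  moreover have "P \<noteq> 0"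
    using assms(6,11) by (auto simp: rsquarefree_def)
  ultimately obtain Q where "poly_over K Q" "p_linearized p Q" "P dvd Q" "degree Q \<le> p ^ N"
    using p_linearized_multiple_in_subfield[OF assms(3) \<open>p > 1\<close> assms(10) _ c(1)] by blast
  then have "degree LP \<le> p ^ N"
    using assms(15) order_trans by blast
  then show ?thesis
    unfolding N_def by (rule sym_power_hom_image_p_linearized_roots[OF prime_p CHAR_p assms(13)])
qed

end
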